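(* Consider the problem $\min_{x\in\mathbb{R}^n}\max_{y\in\Delta}F(x)^Ty$ and assume strict complementarity holds. If $(x,y)$ is a stationary solution, then the vectors $(\nabla f_i(x)^T,1)^T\in\mathbb{R}^{n+1}$, $i\in\mathcal{T}(x)$, are linearly independent (equivalently, the matrix with rows $(\nabla f_i(x)^T,1)$, $i\in\mathcal{T}(x)$, has full row rank).
   Context: $F(x)=(f_1(x),\dots,f_m(x))^T$ is a smooth map $\mathbb{R}^n\to\mathbb{R}^m$ and $\Delta$ the probability simplex in $\mathbb{R}^m$. $(x^*,y^* )$ is a stationary solution if there exist $\mu\in\mathbb{R}$, $\nu\in\mathbb{R}^m$ with $\sum_iy_i^*\nabla f_i(x^* )=0$, $\sum_iy_i^*=1$, $y_i^*\ge0$, $\mu-\nu_i=f_i(x^* )$, $\nu_i\ge0$, $\nu_iy_i^*=0$ for all $i$ (KKT system). Strict complementarity: for every $(x^*,y^*,\mu,\nu)$ satisfying the KKT system, $\nu_i>0$ for all $i$ with $y_i^*=0$. $\mathcal{T}(x)=\{i\in[m]:f_i(x)=\max_jf_j(x)\}$. *)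

theory Defs
  imports "HOL-Analysis.Analysis"
begin

definition prob_simplex :: "(real^'m) set" where
  "prob_simplex = {y. (\<forall>i. 0 \<le> y $ i) \<and> (\<Sum>i\<in>UNIV. y $ i) = 1}"

text \<open>KKT system of min_x max_{y in simplex} F(x)^T y; G i x is the gradient of f_i at x.\<close>
definition KKT :: "(real^'n \<Rightarrow> real^'m) \<Rightarrow> ('m \<Rightarrow> real^'n \<Rightarrow> real^'n)
    \<Rightarrow> real^'n \<Rightarrow> real^'m \<Rightarrow> real \<Rightarrow> real^'m \<Rightarrow> bool" where
  "KKT F G x y \<mu> \<nu> \<longleftrightarrow>
     (\<Sum>i\<in>UNIV. y $ i *\<^sub>R G i x) = 0 \<and>
     y \<in> prob_simplex \<and>
     (\<forall>i. \<mu> - \<nu> $ i = F x $ i) \<and>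
     (\<forall>i. 0 \<le> \<nu> $ i) \<and>
     (\<forall>i. \<nu> $ i * y $ i = 0)"

definition stationary :: "(real^'n \<Rightarrow> real^'m) \<Rightarrow> ('m \<Rightarrow> real^'n \<Rightarrow> real^'n)
    \<Rightarrow> real^'n \<Rightarrow> real^'m \<Rightarrow> bool" where
  "stationary F G x y \<longleftrightarrow> (\<exists>\<mu> \<nu>. KKT F G x y \<mu> \<nu>)"

definition strict_complementarity :: "(real^'n \<Rightarrow> real^'m) \<Rightarrow> ('m \<Rightarrow> real^'n \<Rightarrow> real^'n) \<Rightarrow> bool" where
  "strict_complementarity F G \<longleftrightarrow>
     (\<forall>x y \<mu> \<nu>. KKT F G x y \<mu> \<nu> \<longrightarrow> (\<forall>i. y $ i = 0 \<longrightarrow> 0 < \<nu> $ i))"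

definition active_set :: "(real^'n \<Rightarrow> real^'m) \<Rightarrow> real^'n \<Rightarrow> 'm set" where
  "active_set F x = {i. F x $ i = (MAX j. F x $ j)}"

end

theory Submission
  imports Defs
begin

text \<open>At a KKT point the active set is exactly where the multiplier \<open>\<nu>\<close> vanishes. A nontrivial
  dependency \<open>c\<close> among the vectors \<open>(\<nabla>f\<^sub>i(x), 1)\<close>, \<open>i \<in> \<T>(x)\<close>, sums to zero, so it has a negative
  entry, and it is a direction along which \<open>y\<close> can move without leaving the KKT system. Moving \<open>y\<close>
  along it until the first coordinate reaches zero yields a KKT point with an active index \<open>j\<close>
  where both \<open>y\<^sub>j\<close> and \<open>\<nu>\<^sub>j\<close> vanish, contradicting strict complementarity.\<close>

lemma sum_eq_0_obtains_neg:
  fixes c :: "'a \<Rightarrow> real"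
  assumes "finite S" "sum c S = 0" "i \<in> S" "c i \<noteq> 0"
  obtains j where "j \<in> S" "c j < 0"
proof -
  have "\<not> (\<forall>j\<in>S. 0 \<le> c j)"
  proof
    assume "\<forall>j\<in>S. 0 \<le> c j"
    with assms(1,2) have "\<forall>j\<in>S. c j = 0" by (simp add: sum_nonneg_eq_0_iff)
    with assms(3,4) show False by blast
  qed
  then show ?thesis using that by force
qed

lemma step_to_boundary:
  fixes y d :: "'a \<Rightarrow> real"
  assumes "finite S" "\<And>i. i \<in> S \<Longrightarrow> 0 \<le> y i" "k \<in> S" "d k < 0"
  obtains t j where "\<And>i. i \<in> S \<Longrightarrow> 0 \<le> y i + t * d i" "j \<in> S" "d j < 0" "y j + t * d j = 0"
proof -
  define N where "N = {i \<in> S. d i < 0}"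
  define r where "r i = y i / - d i" for i
  have "finite N" "N \<noteq> {}" using assms by (auto simp: N_def)
  then obtain j where j: "j \<in> N" "r j = Min (r ` N)"
    by (metis (mono_tags, lifting) Min_in finite_imageI image_iff image_is_empty)
  have r_min: "r j \<le> r i" if "i \<in> N" for i
    using j \<open>finite N\<close> that by simp
  have "j \<in> S" "d j < 0" using j by (auto simp: N_def)
  then have "0 \<le> r j" using assms(2) by (simp add: r_def divide_nonneg_neg)
  have "0 \<le> y i + r j * d i" if "i \<in> S" for i
  proof (cases "d i < 0")
    case True
    with that r_min have "r j * - d i \<le> y i" by (simp add: N_def r_def field_simps)
    then show ?thesis by simp
  next
    case False
    with \<open>0 \<le> r j\<close> assms(2)[OF that] show ?thesis by simp
  qed
  moreover have "y j + r j * d j = 0" using \<open>d j < 0\<close> by (simp add: r_def)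
  ultimately show ?thesis using that \<open>j \<in> S\<close> \<open>d j < 0\<close> by blast
qed

lemma KKT_Max_eq:
  assumes K: "KKT F G x y \<mu> \<nu>"
  shows "(MAX j. F x $ j) = \<mu>"
proof (rule Max_eqI)
  have "(\<Sum>i\<in>UNIV. y $ i) = 1" using K by (simp add: KKT_def prob_simplex_def)
  then obtain k where "y $ k \<noteq> 0" by (metis sum.neutral zero_neq_one)
  with K have "F x $ k = \<mu>" by (simp add: KKT_def) (metis diff_zero)
  then show "\<mu> \<in> range (\<lambda>j. F x $ j)" by (metis rangeI)
next
  fix z assume "z \<in> range (\<lambda>j. F x $ j)"
  then obtain j where "z = F x $ j" by blast
  moreover have "\<mu> - \<nu> $ j = F x $ j" "0 \<le> \<nu> $ j" using K by (simp_all add: KKT_def)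
  ultimately show "z \<le> \<mu>" by linarith
qed simp

lemma KKT_active_set_eq:
  assumes K: "KKT F G x y \<mu> \<nu>"
  shows "active_set F x = {i. \<nu> $ i = 0}"
proof -
  have F_eq: "F x $ i = \<mu> - \<nu> $ i" for i using K by (simp add: KKT_def)
  show ?thesis unfolding active_set_def KKT_Max_eq[OF K] by (simp add: F_eq)
qed

lemma KKT_add_direction:
  assumes K: "KKT F G x y \<mu> \<nu>"
    and grad_d: "(\<Sum>i\<in>UNIV. d $ i *\<^sub>R G i x) = 0"
    and sum_d: "(\<Sum>i\<in>UNIV. d $ i) = 0"
    and supp_d: "\<And>i. d $ i \<noteq> 0 \<Longrightarrow> \<nu> $ i = 0"
    and nonneg: "\<And>i. 0 \<le> (y + d) $ i"
  shows "KKT F G x (y + d) \<mu> \<nu>"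
proof -
  have "(\<Sum>i\<in>UNIV. (y + d) $ i *\<^sub>R G i x)
      = (\<Sum>i\<in>UNIV. y $ i *\<^sub>R G i x) + (\<Sum>i\<in>UNIV. d $ i *\<^sub>R G i x)"
    by (simp add: scaleR_add_left sum.distrib)
  moreover have "(\<Sum>i\<in>UNIV. (y + d) $ i) = (\<Sum>i\<in>UNIV. y $ i) + (\<Sum>i\<in>UNIV. d $ i)"
    by (simp add: sum.distrib)
  moreover have "\<nu> $ i * (y + d) $ i = 0" for i
    using K supp_d[of i] by (cases "d $ i = 0") (auto simp: KKT_def)
  ultimately show ?thesis
    using K grad_d sum_d nonneg by (auto simp: KKT_def prob_simplex_def)
qed

lemma strict_complementarity_null_direction:
  assumes sc: "strict_complementarity F G"
    and K: "KKT F G x y \<mu> \<nu>"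
    and grad_d: "(\<Sum>i\<in>UNIV. d $ i *\<^sub>R G i x) = 0"
    and sum_d: "(\<Sum>i\<in>UNIV. d $ i) = 0"
    and supp_d: "\<And>i. d $ i \<noteq> 0 \<Longrightarrow> i \<in> active_set F x"
  shows "d = 0"
proof (rule ccontr)
  assume "d \<noteq> 0"
  then obtain i where "d $ i \<noteq> 0" by (metis vec_eq_iff zero_index)
  then obtain k where "d $ k < 0"
    using sum_eq_0_obtains_neg[OF finite sum_d UNIV_I] by blast
  have y_nonneg: "0 \<le> y $ i" for i using K by (simp add: KKT_def prob_simplex_def)
  obtain t j where step: "\<And>i. 0 \<le> y $ i + t * d $ i" and "d $ j < 0" and "y $ j + t * d $ j = 0"
    by (rule step_to_boundary[of UNIV "($) y" k "($) d"]) (use y_nonneg \<open>d $ k < 0\<close> in auto)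
  have \<nu>_supp: "\<nu> $ i = 0" if "d $ i \<noteq> 0" for i
    using supp_d[OF that] KKT_active_set_eq[OF K] by simp
  have "KKT F G x (y + t *\<^sub>R d) \<mu> \<nu>"
  proof (rule KKT_add_direction[OF K])
    have "(\<Sum>i\<in>UNIV. (t *\<^sub>R d) $ i *\<^sub>R G i x) = t *\<^sub>R (\<Sum>i\<in>UNIV. d $ i *\<^sub>R G i x)"
      by (simp add: scaleR_sum_right)
    then show "(\<Sum>i\<in>UNIV. (t *\<^sub>R d) $ i *\<^sub>R G i x) = 0"
      using grad_d by simp
    show "(\<Sum>i\<in>UNIV. (t *\<^sub>R d) $ i) = 0"
      using sum_d by (simp add: sum_distrib_left[symmetric])
    show "\<nu> $ i = 0" if "(t *\<^sub>R d) $ i \<noteq> 0" for i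
      using that \<nu>_supp by simp
    show "0 \<le> (y + t *\<^sub>R d) $ i" for i
      using step by simp
  qed
  moreover have "(y + t *\<^sub>R d) $ j = 0" using \<open>y $ j + t * d $ j = 0\<close> by simp
  ultimately have "0 < \<nu> $ j" using sc unfolding strict_complementarity_def by blast
  with \<nu>_supp \<open>d $ j < 0\<close> show False by simp
qed

theorem lemma20:
  fixes F :: "real^'n \<Rightarrow> real^'m"
    and G :: "'m \<Rightarrow> real^'n \<Rightarrow> real^'n"
    and x :: "real^'n" and y :: "real^'m"
  assumes grad: "\<And>i z. GDERIV (\<lambda>w. F w $ i) z :> G i z"
    and C1: "\<And>i. continuous_on UNIV (G i)"
    and sc: "strict_complementarity F G"
    and st: "stationary F G x y"
  shows "\<forall>c :: 'm \<Rightarrow> real.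
           (\<Sum>i\<in>active_set F x. c i *\<^sub>R (G i x, 1 :: real)) = 0
           \<longrightarrow> (\<forall>i\<in>active_set F x. c i = 0)"
proof (intro allI impI ballI)
  fix c :: "'m \<Rightarrow> real" and i
  assume dep: "(\<Sum>i\<in>active_set F x. c i *\<^sub>R (G i x, 1 :: real)) = 0"
    and i: "i \<in> active_set F x"
  obtain \<mu> \<nu> where K: "KKT F G x y \<mu> \<nu>" using st unfolding stationary_def by blast
  define d :: "real^'m" where "d = (\<chi> i. if i \<in> active_set F x then c i else 0)"
  have "(\<Sum>i\<in>UNIV. d $ i *\<^sub>R G i x) = fst (\<Sum>i\<in>active_set F x. c i *\<^sub>R (G i x, 1 :: real))"
    by (simp add: d_def fst_sum if_distrib[where f="\<lambda>a. a *\<^sub>R _"] sum.If_cases)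
  then have grad_d: "(\<Sum>i\<in>UNIV. d $ i *\<^sub>R G i x) = 0" using dep by simp
  have "(\<Sum>i\<in>UNIV. d $ i) = snd (\<Sum>i\<in>active_set F x. c i *\<^sub>R (G i x, 1 :: real))"
    by (simp add: d_def snd_sum sum.If_cases)
  then have sum_d: "(\<Sum>i\<in>UNIV. d $ i) = 0" using dep by simp
  have supp_d: "i \<in> active_set F x" if "d $ i \<noteq> 0" for i
    using that by (auto simp: d_def split: if_splits)
  have "d = 0" by (rule strict_complementarity_null_direction[OF sc K grad_d sum_d supp_d])
  then have "d $ i = 0" by simp
  with i show "c i = 0" by (simp add: d_def)
qed

end
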